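(* Let $T$ be an operator function on an interval $\Delta$ satisfying (A1)–(A3) and (VM). Let $\mu_1,\mu_2\in\Delta$ with $\mu_1<\mu_2$, and let $\varepsilon,\delta>0$ be such that for all $\lambda\in[\mu_1,\mu_2]$ and $x\in\mathcal D$: $|\mathfrak t(\lambda)[x]|\le\varepsilon\|x\|^2\Rightarrow\mathfrak t'(\lambda)[x]\le-\delta\|x\|^2$. Let $a,b>0$, set $c:=\min\{\varepsilon,\delta(\mu_2-\mu_1)\}$ and suppose $ac>b(a+b+3c)$. If $u\in\mathcal D$ and $v\in\mathrm{dom}(T(\mu_2))$ satisfy $\mathfrak t(\mu_2)[u]\ge a\|u\|^2$ and $\|T(\mu_2)v\|\le b\|v\|$, and $u\ne0$ or $v\ne0$, then $\mathfrak t(\mu_1)[u+v]>0$.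
   Context: For a self-adjoint operator $A$ with spectral measure $E$, its form is $\mathfrak a[x,y]=\int_{\mathbb R}\mu\,d\langle E(\mu)x,y\rangle$ on $\mathrm{dom}(|A|^{1/2})$, $\mathfrak a[x]:=\mathfrak a[x,x]$. (A1) $T(\lambda)$ self-adjoint for each $\lambda\in\Delta$, with form $\mathfrak t(\lambda)$; (A2) $\mathrm{dom}\,\mathfrak t(\lambda)=:\mathcal D$ independent of $\lambda$; (A3) for each $x\in\mathcal D\setminus\{0\}$, $\lambda\mapsto\mathfrak t(\lambda)[x]$ is continuous, and if $\mathfrak t(\lambda_0)[x]=0$ then $\mathfrak t(\lambda)[x]>0$ for $\lambda<\lambda_0$ and $<0$ for $\lambda>\lambda_0$ ($\lambda\in\Delta$). (VM): for every $u\in\mathcal D$, $\mathfrak t(\cdot)[u]$ is differentiable on $\Delta$ with derivative $\mathfrak t'(\cdot)[u]$, and for every compact subinterval $I\subset\Delta$ there are $\varepsilon,\delta>0$ with: $x\in\mathcal D$, $\|x\|=1$, $\lambda\in I$, $|\mathfrak t(\lambda)[x]|\le\varepsilon$ imply $\mathfrak t'(\lambda)[x]\le-\delta$. *)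

theory Defs
  imports "HOL-Analysis.Analysis"
begin

text \<open>A complex Hilbert space is a type of class
complex_inner and complete_space.\<close>

class complex_inner = real_normed_vector +
  fixes scaleC :: "complex \<Rightarrow> 'a \<Rightarrow> 'a" (infixr \<open>*\<^sub>C\<close> 75)
    and cinner :: "'a \<Rightarrow> 'a \<Rightarrow> complex"
  assumes scaleC_add_right: "a *\<^sub>C (x + y) = a *\<^sub>C x + a *\<^sub>C y"
    and scaleC_add_left: "(a + b) *\<^sub>C x = a *\<^sub>C x + b *\<^sub>C x"
    and scaleC_scaleC: "a *\<^sub>C (b *\<^sub>C x) = (a * b) *\<^sub>C x"
    and scaleC_one: "1 *\<^sub>C x = x"
    and scaleR_scaleC: "scaleR r x = complex_of_real r *\<^sub>C x"
    and cinner_commute: "cinner x y = cnj (cinner y x)"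
    and cinner_add_left: "cinner (x + y) z = cinner x z + cinner y z"
    and cinner_scaleC_left: "cinner (a *\<^sub>C x) y = a * cinner x y"
    and cinner_ge_zero: "0 \<le> Re (cinner x x)"
    and cinner_eq_zero_iff: "cinner x x = 0 \<longleftrightarrow> x = 0"
    and norm_eq_sqrt_cinner: "norm x = sqrt (Re (cinner x x))"


instantiation complex :: complex_inner
begin
definition scaleC_complex :: "complex \<Rightarrow> complex \<Rightarrow> complex" where "scaleC_complex a x = a * x"
definition cinner_complex :: "complex \<Rightarrow> complex \<Rightarrow> complex" where "cinner_complex x y = x * cnj y"
instance proof
  fix a b :: complex and x y z :: complex and r :: real
  show "a *\<^sub>C (x + y) = a *\<^sub>C x + a *\<^sub>C y" by (simp add: scaleC_complex_def distrib_left)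
  show "(a + b) *\<^sub>C x = a *\<^sub>C x + b *\<^sub>C x" by (simp add: scaleC_complex_def distrib_right)
  show "a *\<^sub>C (b *\<^sub>C x) = (a * b) *\<^sub>C x" by (simp add: scaleC_complex_def)
  show "1 *\<^sub>C x = x" by (simp add: scaleC_complex_def)
  show "scaleR r x = complex_of_real r *\<^sub>C x" by (simp add: scaleC_complex_def scaleR_conv_of_real)
  show "cinner x y = cnj (cinner y x)" by (simp add: cinner_complex_def mult.commute)
  show "cinner (x + y) z = cinner x z + cinner y z" by (simp add: cinner_complex_def distrib_right)
  show "cinner (a *\<^sub>C x) y = a * cinner x y" by (simp add: cinner_complex_def scaleC_complex_def)
  show "0 \<le> Re (cinner x x)" by (simp add: cinner_complex_def complex_mult_cnj)
  show "cinner x x = 0 \<longleftrightarrow> x = 0" by (simp add: cinner_complex_def)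
  show "norm x = sqrt (Re (cinner x x))" by (simp add: cinner_complex_def complex_mult_cnj cmod_def)
qed
end

definition clinear_map :: "('a::complex_inner \<Rightarrow> 'a) \<Rightarrow> bool" where
  "clinear_map f \<longleftrightarrow> (\<forall>x y. f (x + y) = f x + f y) \<and> (\<forall>c x. f (c *\<^sub>C x) = c *\<^sub>C f x)"

definition spectral_measure :: "(real set \<Rightarrow> 'a::complex_inner \<Rightarrow> 'a) \<Rightarrow> bool" where
  "spectral_measure E \<longleftrightarrow>
     (\<forall>B\<in>sets borel. clinear_map (E B) \<and> (\<forall>x. E B (E B x) = E B x)
        \<and> (\<forall>x y. cinner (E B x) y = cinner x (E B y)))
   \<and> (\<forall>x. E UNIV x = x)
   \<and> (\<forall>B\<in>sets borel. \<forall>C\<in>sets borel. \<forall>x. E (B \<inter> C) x = E B (E C x))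
   \<and> (\<forall>F. range F \<subseteq> sets borel \<longrightarrow> disjoint_family F \<longrightarrow>
        (\<forall>x. (\<lambda>n. \<Sum>k<n. E (F k) x) \<longlonglongrightarrow> E (\<Union>(range F)) x))"

definition spectral_dist :: "(real set \<Rightarrow> 'a::complex_inner \<Rightarrow> 'a) \<Rightarrow> 'a \<Rightarrow> real measure" where
  "spectral_dist E x = measure_of UNIV (sets borel) (\<lambda>B. ennreal ((norm (E B x))\<^sup>2))"

text \<open>Form of the self-adjoint operator with spectral measure E:
a[x] = \<integral> \<mu> d\<langle>E(\<mu>)x,x\<rangle> on dom(|A|^(1/2)) = {x. \<integral> |\<mu>| d\<langle>E(\<mu>)x,x\<rangle> < \<infinity>}.\<close>

definition spectral_form_dom :: "(real set \<Rightarrow> 'a::complex_inner \<Rightarrow> 'a) \<Rightarrow> 'a set" where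
  "spectral_form_dom E = {x. integrable (spectral_dist E x) (\<lambda>\<mu>. \<mu>)}"

definition spectral_form :: "(real set \<Rightarrow> 'a::complex_inner \<Rightarrow> 'a) \<Rightarrow> 'a \<Rightarrow> real" where
  "spectral_form E x = (\<integral>\<mu>. \<mu> \<partial>spectral_dist E x)"

text \<open>The operator A = \<integral> \<mu> dE(\<mu>): its domain is {x. \<integral> \<mu>^2 d\<langle>E(\<mu>)x,x\<rangle> < \<infinity>}, and
for x, y in the domain \<langle>Ax,y\<rangle> = \<integral> \<mu> d\<langle>E(\<mu>)x,y\<rangle>, the latter written by polarization.
Since the domain is dense, this determines A on its domain; values of A outside the
domain are irrelevant. (domA, A) represents a self-adjoint operator, and by the
spectral theorem every self-adjoint operator arises this way.\<close>

definition spectral_op_dom :: "(real set \<Rightarrow> 'a::complex_inner \<Rightarrow> 'a) \<Rightarrow> 'a set" where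
  "spectral_op_dom E = {x. (\<integral>\<^sup>+\<mu>. ennreal (\<mu>\<^sup>2) \<partial>spectral_dist E x) < \<infinity>}"

definition spectral_operator ::
  "(real set \<Rightarrow> 'a::complex_inner \<Rightarrow> 'a) \<Rightarrow> 'a set \<Rightarrow> ('a \<Rightarrow> 'a) \<Rightarrow> bool" where
  "spectral_operator E domA A \<longleftrightarrow> spectral_measure E \<and> domA = spectral_op_dom E \<and>
     (\<forall>x\<in>domA. \<forall>y\<in>domA.
        cinner (A x) y = (\<Sum>k<4::nat. \<i> ^ k * complex_of_real (spectral_form E (x + (\<i> ^ k) *\<^sub>C y))) / 4)"

end

theory Submission
  imports Defs
begin

(* Write X = |u|, Y = |v|, and let E be the spectral measure of T(mu2).
   (1) Splitting u by the spectral projections E[-n,n] into a part in dom T(mu2) and a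
       tail whose form contribution vanishes as n grows, and using polarization, one gets
       t(mu2)[u+v] >= t(mu2)[u] + t(mu2)[v] - 2 |T(mu2) v| |u|; together with
       t(mu2)[v] = Re <T(mu2) v, v> >= -b Y^2 this gives
       t(mu2)[u+v] >= a X^2 - 2 b X Y - b Y^2.
   (2) The hypothesis a c > b (a + b + 3 c) makes a X^2 - 2 b X Y - b Y^2 + c (X - Y)^2 a
       positive definite quadratic form, so t(mu2)[u+v] > -c |u+v|^2 (hence u + v <> 0).
   (3) If t(mu1)[u+v] <= 0, the crossing property (A3) forces t(l)[u+v] < 0 on (mu1, mu2];
       there, while |t(l)[u+v]| <= eps |u+v|^2, the derivative is <= -delta |u+v|^2, and a
       comparison argument yields t(mu2)[u+v] <= -c |u+v|^2, contradicting (2).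
   The file develops: elementary facts on complex inner product spaces; transfer of linear
   relations between measures to integrals; the spectral calculus needed for (1) inside a
   locale for a fixed spectral measure; the quadratic estimate (2); the real-analysis
   comparison lemmas for (3); and finally the theorem. *)

section \<open>Complex inner product spaces\<close>

lemma cinner_add_right: "cinner x (y + z) = cinner x y + cinner x (z::'a::complex_inner)"
  by (metis cinner_commute cinner_add_left complex_cnj_add)

lemma cinner_zero_left [simp]: "cinner 0 (y::'a::complex_inner) = 0"
  using cinner_add_left[of 0 0 y] by simp

lemma cinner_zero_right [simp]: "cinner y (0::'a::complex_inner) = 0"
  by (metis cinner_commute cinner_zero_left complex_cnj_zero)

lemma cinner_scaleR_left: "cinner (r *\<^sub>R x) (y::'a::complex_inner) = complex_of_real r * cinner x y"
  by (simp add: scaleR_scaleC cinner_scaleC_left)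

lemma Re_cinner_commute: "Re (cinner x (y::'a::complex_inner)) = Re (cinner y x)"
  by (subst cinner_commute) simp

lemma Re_cinner_scaleR_right: "Re (cinner x (r *\<^sub>R y::'a::complex_inner)) = r * Re (cinner x y)"
  by (simp add: Re_cinner_commute[of x] cinner_scaleR_left)

lemma norm_sq_cinner: "(norm x)\<^sup>2 = Re (cinner x (x::'a::complex_inner))"
  by (simp add: norm_eq_sqrt_cinner cinner_ge_zero)

lemma norm_add_sq:
  "(norm (x + y))\<^sup>2 = (norm x)\<^sup>2 + (norm y)\<^sup>2 + 2 * Re (cinner x (y::'a::complex_inner))"
  by (simp add: norm_sq_cinner cinner_add_left cinner_add_right Re_cinner_commute[of y x])

lemma parallelogram:
  "(norm (x + y))\<^sup>2 + (norm (x - y))\<^sup>2 = 2 * (norm x)\<^sup>2 + 2 * (norm (y::'a::complex_inner))\<^sup>2"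
proof -
  have "Re (cinner x (- y)) = - Re (cinner x y)"
    using Re_cinner_scaleR_right[of x "-1" y] by simp
  then show ?thesis using norm_add_sq[of x y] norm_add_sq[of x "- y"] by simp
qed

lemma Re_cinner_Cauchy_Schwarz: "\<bar>Re (cinner x (y::'a::complex_inner))\<bar> \<le> norm x * norm y"
proof (cases "y = 0")
  case True then show ?thesis by simp
next
  case False
  define r where "r = Re (cinner x y)"
  define s where "s = - r / (norm y)\<^sup>2"
  have ny: "norm y > 0" using False by simp
  have "0 \<le> (norm (x + s *\<^sub>R y))\<^sup>2" by simp
  also have "\<dots> = (norm x)\<^sup>2 + s\<^sup>2 * (norm y)\<^sup>2 + 2 * s * r"
    by (simp add: norm_add_sq Re_cinner_scaleR_right r_def power_mult_distrib)
  also have "\<dots> = (norm x)\<^sup>2 - r\<^sup>2 / (norm y)\<^sup>2"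
    using ny by (simp add: s_def field_simps power2_eq_square)
  finally have "r\<^sup>2 \<le> (norm x * norm y)\<^sup>2"
    using ny by (simp add: field_simps power_mult_distrib)
  then show ?thesis unfolding r_def
    by (metis power2_abs power2_le_imp_le mult_nonneg_nonneg norm_ge_zero)
qed

lemma cinner_sum_left: "cinner (\<Sum>k\<in>A. f k) (y::'a::complex_inner) = (\<Sum>k\<in>A. cinner (f k) y)"
proof (cases "finite A")
  case True then show ?thesis by (induct rule: finite_induct) (auto simp: cinner_add_left)
qed simp

lemma pythagoras_sum:
  fixes f :: "nat \<Rightarrow> 'a::complex_inner"
  assumes "\<And>j k. j \<noteq> k \<Longrightarrow> Re (cinner (f j) (f k)) = 0"
  shows "(norm (\<Sum>k<(n::nat). f k))\<^sup>2 = (\<Sum>k<n. (norm (f k))\<^sup>2)"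
proof (induction n)
  case (Suc n)
  have "Re (cinner (\<Sum>k<n. f k) (f n)) = (\<Sum>k<n. Re (cinner (f k) (f n)))"
    by (simp add: cinner_sum_left)
  also have "\<dots> = 0" using assms by simp
  finally show ?case using Suc by (simp add: norm_add_sq)
qed simp

section \<open>Linear relations between measures transfer to integrals\<close>

text \<open>If a1 M1 + a2 M2 = a3 M3 + a4 M4 as measures on the Borel sets, the same relation
  holds for nonnegative integrals; this is how the parallelogram law for the vectors E(C)x
  becomes a parallelogram law for the spectral forms.\<close>

lemma nn_integral_linear_relation:
  fixes M1 M2 M3 M4 :: "real measure" and a1 a2 a3 a4 :: ennreal
  assumes s: "sets M1 = sets borel" "sets M2 = sets borel" "sets M3 = sets borel" "sets M4 = sets borel"
    and eq: "\<And>C. C \<in> sets borel \<Longrightarrow>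
      a1 * emeasure M1 C + a2 * emeasure M2 C = a3 * emeasure M3 C + a4 * emeasure M4 C"
    and g: "g \<in> borel_measurable borel"
  shows "a1 * (\<integral>\<^sup>+x. g x \<partial>M1) + a2 * (\<integral>\<^sup>+x. g x \<partial>M2) = a3 * (\<integral>\<^sup>+x. g x \<partial>M3) + a4 * (\<integral>\<^sup>+x. g x \<partial>M4)"
  using g
proof (induct rule: borel_measurable_induct)
  case (cong f g)
  then have "f = g" by auto
  then show ?case using cong by simp
next
  case (set A)
  then show ?case using s eq by simp
next
  case (mult u c)
  have m: "u \<in> borel_measurable M1" "u \<in> borel_measurable M2" "u \<in> borel_measurable M3" "u \<in> borel_measurable M4"
    using mult(2) s by (auto simp: measurable_def)
  have "a1 * integral\<^sup>N M1 (\<lambda>x. c * u x) + a2 * integral\<^sup>N M2 (\<lambda>x. c * u x)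
      = c * (a1 * integral\<^sup>N M1 u + a2 * integral\<^sup>N M2 u)"
    by (simp add: nn_integral_cmult[OF m(1)] nn_integral_cmult[OF m(2)] distrib_left mult_ac)
  also have "\<dots> = c * (a3 * integral\<^sup>N M3 u + a4 * integral\<^sup>N M4 u)" using mult(4) by simp
  also have "\<dots> = a3 * integral\<^sup>N M3 (\<lambda>x. c * u x) + a4 * integral\<^sup>N M4 (\<lambda>x. c * u x)"
    by (simp add: nn_integral_cmult[OF m(3)] nn_integral_cmult[OF m(4)] distrib_left mult_ac)
  finally show ?case .
next
  case (add u v)
  have m: "u \<in> borel_measurable M1" "u \<in> borel_measurable M2" "u \<in> borel_measurable M3" "u \<in> borel_measurable M4"
    "v \<in> borel_measurable M1" "v \<in> borel_measurable M2" "v \<in> borel_measurable M3" "v \<in> borel_measurable M4"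
    using add(1) add(4) s by (auto simp: measurable_def)
  have "a1 * integral\<^sup>N M1 (\<lambda>x. v x + u x) + a2 * integral\<^sup>N M2 (\<lambda>x. v x + u x)
      = (a1 * integral\<^sup>N M1 v + a2 * integral\<^sup>N M2 v) + (a1 * integral\<^sup>N M1 u + a2 * integral\<^sup>N M2 u)"
    using m by (simp add: nn_integral_add distrib_left add_ac)
  also have "\<dots> = (a3 * integral\<^sup>N M3 v + a4 * integral\<^sup>N M4 v) + (a3 * integral\<^sup>N M3 u + a4 * integral\<^sup>N M4 u)"
    using add(3) add(7) by simp
  also have "\<dots> = a3 * integral\<^sup>N M3 (\<lambda>x. v x + u x) + a4 * integral\<^sup>N M4 (\<lambda>x. v x + u x)"
    using m by (simp add: nn_integral_add distrib_left add_ac)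
  finally show ?case .
next
  case (seq U)
  have m: "\<And>i. U i \<in> borel_measurable M1" "\<And>i. U i \<in> borel_measurable M2"
    "\<And>i. U i \<in> borel_measurable M3" "\<And>i. U i \<in> borel_measurable M4"
    using seq(1) s by (auto simp: measurable_def)
  have inc: "incseq (\<lambda>i. a * integral\<^sup>N M (U i))" if "\<And>i. U i \<in> borel_measurable M" for a M
    using seq(4) by (auto simp: incseq_def le_fun_def intro!: mult_left_mono nn_integral_mono)
  have sup: "a * (\<integral>\<^sup>+x. (SUP i. U i) x \<partial>M) = (SUP i. a * integral\<^sup>N M (U i))"
    if "\<And>i. U i \<in> borel_measurable M" for a M
    using nn_integral_monotone_convergence_SUP[OF seq(4) that]
    by (simp add: SUP_mult_left_ennreal image_image)
  show ?case
    unfolding sup[OF m(1)] sup[OF m(2)] sup[OF m(3)] sup[OF m(4)]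
      ennreal_SUP_add[OF inc[OF m(1)] inc[OF m(2)], symmetric]
      ennreal_SUP_add[OF inc[OF m(3)] inc[OF m(4)], symmetric]
    using seq(3) by simp
qed

lemma integral_linear_relation:
  fixes M1 M2 M3 M4 :: "real measure" and a1 a2 a3 a4 :: real
  assumes s: "sets M1 = sets borel" "sets M2 = sets borel" "sets M3 = sets borel" "sets M4 = sets borel"
    and a: "a1 \<ge> 0" "a2 \<ge> 0" "a3 > 0" "a4 > 0"
    and eq: "\<And>C. C \<in> sets borel \<Longrightarrow>
      a1 * emeasure M1 C + a2 * emeasure M2 C = a3 * emeasure M3 C + a4 * emeasure M4 C"
    and i1: "integrable M1 f" and i2: "integrable M2 f"
    and f: "f \<in> borel_measurable borel"
  shows "integrable M3 f" "integrable M4 f"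
    "a1 * integral\<^sup>L M1 f + a2 * integral\<^sup>L M2 f = a3 * integral\<^sup>L M3 f + a4 * integral\<^sup>L M4 f"
proof -
  have eq': "\<And>C. C \<in> sets borel \<Longrightarrow> ennreal a1 * emeasure M1 C + ennreal a2 * emeasure M2 C
      = ennreal a3 * emeasure M3 C + ennreal a4 * emeasure M4 C"
    using eq by simp
  have fp: "(\<lambda>x. ennreal (f x)) \<in> borel_measurable borel"
    and fm: "(\<lambda>x. ennreal (- f x)) \<in> borel_measurable borel"
    using f by auto
  note P = nn_integral_linear_relation[OF s eq' fp]
    and N = nn_integral_linear_relation[OF s eq' fm]
  have m: "f \<in> borel_measurable M3" "f \<in> borel_measurable M4"
    using f s by (auto simp: measurable_def)
  obtain p1 q1 where 1: "(\<integral>\<^sup>+x. ennreal (f x) \<partial>M1) = ennreal p1" "(\<integral>\<^sup>+x. ennreal (- f x) \<partial>M1) = ennreal q1"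
    "integral\<^sup>L M1 f = p1 - q1" "p1 \<ge> 0" "q1 \<ge> 0"
    using integrableE[OF i1] by metis
  obtain p2 q2 where 2: "(\<integral>\<^sup>+x. ennreal (f x) \<partial>M2) = ennreal p2" "(\<integral>\<^sup>+x. ennreal (- f x) \<partial>M2) = ennreal q2"
    "integral\<^sup>L M2 f = p2 - q2" "p2 \<ge> 0" "q2 \<ge> 0"
    using integrableE[OF i2] by metis
  have finite_summands: "x < top" "y < top"
    if "ennreal a3 * x + ennreal a4 * y = ennreal r" for x y r
    using that a top.not_eq_extremum by fastforce+
  have pos_part: "ennreal a3 * (\<integral>\<^sup>+x. ennreal (f x) \<partial>M3) + ennreal a4 * (\<integral>\<^sup>+x. ennreal (f x) \<partial>M4)
      = ennreal (a1 * p1 + a2 * p2)"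
    and neg_part: "ennreal a3 * (\<integral>\<^sup>+x. ennreal (- f x) \<partial>M3) + ennreal a4 * (\<integral>\<^sup>+x. ennreal (- f x) \<partial>M4)
      = ennreal (a1 * q1 + a2 * q2)"
    using P N 1 2 a by (simp_all add: ennreal_mult)
  show i3: "integrable M3 f" "integrable M4 f"
    using finite_summands[OF pos_part] finite_summands[OF neg_part] m
    by (auto simp: real_integrable_def)
  obtain p3 q3 where 3: "(\<integral>\<^sup>+x. ennreal (f x) \<partial>M3) = ennreal p3" "(\<integral>\<^sup>+x. ennreal (- f x) \<partial>M3) = ennreal q3"
    "integral\<^sup>L M3 f = p3 - q3" "p3 \<ge> 0" "q3 \<ge> 0"
    using integrableE[OF i3(1)] by metis
  obtain p4 q4 where 4: "(\<integral>\<^sup>+x. ennreal (f x) \<partial>M4) = ennreal p4" "(\<integral>\<^sup>+x. ennreal (- f x) \<partial>M4) = ennreal q4"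
    "integral\<^sup>L M4 f = p4 - q4" "p4 \<ge> 0" "q4 \<ge> 0"
    using integrableE[OF i3(2)] by metis
  have "a1 * p1 + a2 * p2 = a3 * p3 + a4 * p4"
  proof -
    have "ennreal (a1 * p1 + a2 * p2) = ennreal (a3 * p3 + a4 * p4)"
      using P unfolding 1 2 3 4 using a 1 2 3 4 by (simp add: ennreal_mult)
    then show ?thesis using a 1 2 3 4 by (subst (asm) ennreal_inj) auto
  qed
  moreover have "a1 * q1 + a2 * q2 = a3 * q3 + a4 * q4"
  proof -
    have "ennreal (a1 * q1 + a2 * q2) = ennreal (a3 * q3 + a4 * q4)"
      using N unfolding 1 2 3 4 using a 1 2 3 4 by (simp add: ennreal_mult)
    then show ?thesis using a 1 2 3 4 by (subst (asm) ennreal_inj) auto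
  qed
  ultimately show "a1 * integral\<^sup>L M1 f + a2 * integral\<^sup>L M2 f = a3 * integral\<^sup>L M3 f + a4 * integral\<^sup>L M4 f"
    unfolding 1 2 3 4 by (simp add: algebra_simps)
qed

section \<open>Calculus of a fixed spectral measure\<close>

locale spectral_resolution =
  fixes E :: "real set \<Rightarrow> 'a::complex_inner \<Rightarrow> 'a"
  assumes spectral: "spectral_measure E"
begin

lemma E_add: "B \<in> sets borel \<Longrightarrow> E B (x + y) = E B x + E B y"
  using spectral unfolding spectral_measure_def clinear_map_def by blast

lemma E_scaleR: "B \<in> sets borel \<Longrightarrow> E B (r *\<^sub>R x) = r *\<^sub>R E B x"
  using spectral unfolding spectral_measure_def clinear_map_def by (simp add: scaleR_scaleC)

lemma E_diff: "B \<in> sets borel \<Longrightarrow> E B (x - y) = E B x - E B y"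
  using E_add[of B x "- y"] E_scaleR[of B "-1" y] by simp

lemma E_idem: "B \<in> sets borel \<Longrightarrow> E B (E B x) = E B x"
  using spectral unfolding spectral_measure_def by blast

lemma E_selfadjoint: "B \<in> sets borel \<Longrightarrow> cinner (E B x) y = cinner x (E B y)"
  using spectral unfolding spectral_measure_def by blast

lemma E_UNIV: "E UNIV x = x"
  using spectral unfolding spectral_measure_def by blast

lemma E_inter: "B \<in> sets borel \<Longrightarrow> C \<in> sets borel \<Longrightarrow> E (B \<inter> C) x = E B (E C x)"
  using spectral unfolding spectral_measure_def by blast

lemma E_countably_additive: "range F \<subseteq> sets borel \<Longrightarrow> disjoint_family F \<Longrightarrow>
    (\<lambda>n. \<Sum>k<n. E (F k) x) \<longlonglongrightarrow> E (\<Union>(range F)) x"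
  using spectral unfolding spectral_measure_def by blast

lemma E_empty: "E {} x = 0"
proof -
  let ?s = "\<lambda>n. \<Sum>k<n. E ({}::real set) x"
  have "?s \<longlonglongrightarrow> E {} x"
    using E_countably_additive[of "\<lambda>_. {}" x] by (simp add: disjoint_family_on_def)
  then have "(\<lambda>n. ?s (Suc n) - ?s n) \<longlonglongrightarrow> E {} x - E {} x"
    by (intro tendsto_diff LIMSEQ_Suc)
  then show ?thesis by (simp add: LIMSEQ_const_iff del: sum_constant)
qed

lemma E_disjoint: "B \<in> sets borel \<Longrightarrow> C \<in> sets borel \<Longrightarrow> B \<inter> C = {} \<Longrightarrow> E B (E C x) = 0"
  using E_inter[of B C x] by (simp add: E_empty)

lemma E_orthogonal:
  assumes B: "B \<in> sets borel" and C: "C \<in> sets borel" and disj: "B \<inter> C = {}"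
  shows "cinner (E B x) (E C y) = 0"
proof -
  have "cinner (E B x) (E C y) = cinner (E C (E B x)) y" using E_selfadjoint[OF C] by simp
  also have "E C (E B x) = 0" using E_disjoint[OF C B] disj by blast
  finally show ?thesis by simp
qed

abbreviation nu :: "'a \<Rightarrow> real measure" where "nu x \<equiv> spectral_dist E x"

lemma sets_nu [simp, measurable_cong]: "sets (nu x) = sets borel"
  unfolding spectral_dist_def
  by (metis sets.sigma_sets_eq sets_measure_of sets.space_closed space_borel)

lemma space_nu [simp]: "space (nu x) = UNIV"
  using sets_eq_imp_space_eq[OF sets_nu[of x]] by simp

lemma emeasure_nu: "C \<in> sets borel \<Longrightarrow> emeasure (nu x) C = ennreal ((norm (E C x))\<^sup>2)"
  unfolding spectral_dist_def
proof (rule emeasure_measure_of_sigma)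
  show "sigma_algebra UNIV (sets borel)"
    using sets.sigma_algebra_axioms[of borel] by simp
  show "positive (sets borel) (\<lambda>B. ennreal ((norm (E B x))\<^sup>2))"
    by (simp add: positive_def E_empty)
  show "countably_additive (sets borel) (\<lambda>B. ennreal ((norm (E B x))\<^sup>2))"
    unfolding countably_additive_def
  proof (intro allI impI)
    fix F :: "nat \<Rightarrow> real set"
    assume F: "range F \<subseteq> sets borel" and d: "disjoint_family F"
    have orth: "Re (cinner (E (F j) x) (E (F k) x)) = 0" if "j \<noteq> k" for j k
      using E_orthogonal[of "F j" "F k" x x] F d that unfolding disjoint_family_on_def by auto
    have "(\<lambda>n. (norm (\<Sum>k<n. E (F k) x))\<^sup>2) \<longlonglongrightarrow> (norm (E (\<Union>(range F)) x))\<^sup>2"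
      by (intro tendsto_intros E_countably_additive F d)
    then have "(\<lambda>i. (norm (E (F i) x))\<^sup>2) sums (norm (E (\<Union>(range F)) x))\<^sup>2"
      unfolding sums_def using pythagoras_sum[of "\<lambda>k. E (F k) x", OF orth] by simp
    then show "(\<Sum>i. ennreal ((norm (E (F i) x))\<^sup>2)) = ennreal ((norm (E (\<Union> (range F)) x))\<^sup>2)"
      by (intro suminf_ennreal_eq) auto
  qed
qed

lemma emeasure_nu_UNIV: "emeasure (nu x) UNIV = ennreal ((norm x)\<^sup>2)"
  using emeasure_nu[of UNIV x] by (simp add: E_UNIV)

lemma norm_E_le: "B \<in> sets borel \<Longrightarrow> norm (E B x) \<le> norm x"
proof -
  assume B: "B \<in> sets borel"
  have "emeasure (nu x) B \<le> emeasure (nu x) UNIV" by (intro emeasure_mono) auto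
  then have "(norm (E B x))\<^sup>2 \<le> (norm x)\<^sup>2" using B by (simp add: emeasure_nu emeasure_nu_UNIV)
  then show ?thesis by (simp add: power_mono_iff)
qed

lemma nu_E: assumes B: "B \<in> sets borel"
  shows "nu (E B x) = density (nu x) (\<lambda>\<mu>. ennreal (indicator B \<mu>))"
proof (rule measure_eqI)
  fix C assume "C \<in> sets (nu (E B x))"
  then have C: "C \<in> sets borel" by simp
  have "emeasure (nu (E B x)) C = emeasure (nu x) (C \<inter> B)"
    using C B by (simp add: emeasure_nu E_inter)
  also have "\<dots> = (\<integral>\<^sup>+\<mu>. indicator (C \<inter> B) \<mu> \<partial>nu x)" using C B by simp
  also have "\<dots> = (\<integral>\<^sup>+\<mu>. ennreal (indicator B \<mu>) * indicator C \<mu> \<partial>nu x)"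
    by (intro nn_integral_cong) (auto split: split_indicator)
  also have "\<dots> = emeasure (density (nu x) (\<lambda>\<mu>. ennreal (indicator B \<mu>))) C"
    using B C by (subst emeasure_density) auto
  finally show "emeasure (nu (E B x)) C = emeasure (density (nu x) (\<lambda>\<mu>. ennreal (indicator B \<mu>))) C" .
qed simp

abbreviation form_dom :: "'a set" where "form_dom \<equiv> spectral_form_dom E"
abbreviation form :: "'a \<Rightarrow> real" where "form \<equiv> spectral_form E"
abbreviation op_dom :: "'a set" where "op_dom \<equiv> spectral_op_dom E"

lemma form_dom_iff: "x \<in> form_dom \<longleftrightarrow> integrable (nu x) (\<lambda>\<mu>. \<mu>)"
  by (simp add: spectral_form_dom_def)

lemma form_parallelogram:
  assumes x: "x \<in> form_dom" and y: "y \<in> form_dom"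
  shows "x + y \<in> form_dom" "x - y \<in> form_dom"
    "2 * form x + 2 * form y = form (x + y) + form (x - y)"
proof -
  have eq: "ennreal 2 * emeasure (nu x) C + ennreal 2 * emeasure (nu y) C
      = ennreal 1 * emeasure (nu (x + y)) C + ennreal 1 * emeasure (nu (x - y)) C"
    if C: "C \<in> sets borel" for C
  proof -
    have "2 * (norm (E C x))\<^sup>2 + 2 * (norm (E C y))\<^sup>2 = (norm (E C (x + y)))\<^sup>2 + (norm (E C (x - y)))\<^sup>2"
      using parallelogram[of "E C x" "E C y"] by (simp add: E_add[OF C] E_diff[OF C])
    then have "ennreal (2 * (norm (E C x))\<^sup>2 + 2 * (norm (E C y))\<^sup>2)
        = ennreal ((norm (E C (x + y)))\<^sup>2 + (norm (E C (x - y)))\<^sup>2)"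
      by simp
    then show ?thesis unfolding emeasure_nu[OF C] by (simp add: ennreal_plus ennreal_mult)
  qed
  have i: "integrable (nu x) (\<lambda>\<mu>. \<mu>)" "integrable (nu y) (\<lambda>\<mu>. \<mu>)"
    using x y by (simp_all add: form_dom_iff)
  note L = integral_linear_relation[of "nu x" "nu y" "nu (x + y)" "nu (x - y)" 2 2 1 1,
      OF sets_nu sets_nu sets_nu sets_nu _ _ _ _ eq i, simplified]
  show "x + y \<in> form_dom" "x - y \<in> form_dom" using L(1,2) by (simp_all add: form_dom_iff)
  show "2 * form x + 2 * form y = form (x + y) + form (x - y)"
    using L(3) by (simp add: spectral_form_def)
qed

lemma form_zero: "x \<in> form_dom \<Longrightarrow> form 0 = 0"
  using form_parallelogram[of x x] form_parallelogram[of 0 0] by simp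

lemma form_E:
  assumes B: "B \<in> sets borel" and x: "x \<in> form_dom"
  shows "E B x \<in> form_dom" "form (E B x) = (\<integral>\<mu>. indicator B \<mu> * \<mu> \<partial>nu x)"
proof -
  have m: "(\<lambda>\<mu>::real. \<mu>) \<in> borel_measurable (nu x)"
    "(\<lambda>\<mu>. indicator B \<mu> :: real) \<in> borel_measurable (nu x)"
    using B by auto
  have "integrable (nu x) (\<lambda>\<mu>. indicator B \<mu> *\<^sub>R \<mu>)"
    using integrable_mult_indicator[of B "nu x" "\<lambda>\<mu>. \<mu>"] x B by (simp add: form_dom_iff)
  then show "E B x \<in> form_dom"
    unfolding form_dom_iff nu_E[OF B] using integrable_density[OF m] by simp
  show "form (E B x) = (\<integral>\<mu>. indicator B \<mu> * \<mu> \<partial>nu x)"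
    unfolding spectral_form_def nu_E[OF B] using integral_density[OF m] by simp
qed

lemma form_split:
  assumes B: "B \<in> sets borel" and x: "x \<in> form_dom"
  shows "form x = form (E B x) + form (E (- B) x)"
proof -
  have i: "integrable (nu x) (\<lambda>\<mu>. indicator A \<mu> * \<mu>)" if "A \<in> sets borel" for A
    using integrable_mult_indicator[of A "nu x" "\<lambda>\<mu>. \<mu>"] x that by (simp add: form_dom_iff)
  have "form (E B x) + form (E (- B) x) = (\<integral>\<mu>. indicator B \<mu> * \<mu> + indicator (- B) \<mu> * \<mu> \<partial>nu x)"
    using B x i[of B] i[of "- B"] by (simp add: form_E)
  also have "\<dots> = (\<integral>\<mu>. \<mu> \<partial>nu x)"
    by (intro Bochner_Integration.integral_cong) (auto split: split_indicator)
  finally show ?thesis by (simp add: spectral_form_def)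
qed

lemma form_tail_tendsto_zero:
  assumes x: "x \<in> form_dom"
  shows "(\<lambda>n::nat. form (E (- {- real n..real n}) x)) \<longlonglongrightarrow> 0"
proof -
  have "(\<lambda>n::nat. \<integral>\<mu>. indicator (- {- real n..real n}) \<mu> * \<mu> \<partial>nu x) \<longlonglongrightarrow> (\<integral>\<mu>. 0 \<partial>nu x)"
  proof (rule integral_dominated_convergence[where w="\<lambda>\<mu>. \<bar>\<mu>\<bar>"])
    show "integrable (nu x) (\<lambda>\<mu>. \<bar>\<mu>\<bar>)" using x by (simp add: form_dom_iff)
    show "AE \<mu> in nu x. (\<lambda>n. indicator (- {- real n..real n}) \<mu> * \<mu>) \<longlonglongrightarrow> 0"
    proof (rule AE_I2)
      fix \<mu> :: real
      obtain N :: nat where N: "\<bar>\<mu>\<bar> \<le> real N" using real_arch_simple by blast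
      have "eventually (\<lambda>n. indicator (- {- real n..real n}) \<mu> * \<mu> = 0) sequentially"
        unfolding eventually_sequentially
        by (rule exI[of _ N]) (use N in \<open>auto split: split_indicator\<close>)
      then show "(\<lambda>n. indicator (- {- real n..real n}) \<mu> * \<mu>) \<longlonglongrightarrow> 0"
        by (rule tendsto_eventually)
    qed
    show "AE \<mu> in nu x. norm (indicator (- {- real n..real n}) \<mu> * \<mu>) \<le> \<bar>\<mu>\<bar>" for n
      by (rule AE_I2) (auto split: split_indicator)
  qed auto
  then show ?thesis using x by (simp add: form_E)
qed

lemma op_dom_iff: "x \<in> op_dom \<longleftrightarrow> (\<integral>\<^sup>+\<mu>. ennreal (\<mu>\<^sup>2) \<partial>nu x) < \<infinity>"
  by (simp add: spectral_op_dom_def)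

lemma op_dom_subset_form_dom: "x \<in> op_dom \<Longrightarrow> x \<in> form_dom"
proof -
  assume "x \<in> op_dom"
  then have fin: "(\<integral>\<^sup>+\<mu>. ennreal (\<mu>\<^sup>2) \<partial>nu x) < \<infinity>" by (simp add: op_dom_iff)
  have abs_le: "\<bar>\<mu>\<bar> \<le> 1 + \<mu>\<^sup>2" for \<mu> :: real
  proof -
    have "0 \<le> (\<bar>\<mu>\<bar> - 1)\<^sup>2" by simp
    then show ?thesis by (simp add: power2_eq_square algebra_simps abs_mult_self_eq)
  qed
  have "(\<integral>\<^sup>+\<mu>. ennreal (norm \<mu>) \<partial>nu x) \<le> (\<integral>\<^sup>+\<mu>. ennreal 1 + ennreal (\<mu>\<^sup>2) \<partial>nu x)"
    using ennreal_leI[OF abs_le] by (intro nn_integral_mono) (simp add: ennreal_plus)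
  also have "\<dots> = ennreal ((norm x)\<^sup>2) + (\<integral>\<^sup>+\<mu>. ennreal (\<mu>\<^sup>2) \<partial>nu x)"
    by (subst nn_integral_add) (auto simp: emeasure_nu_UNIV)
  finally have "(\<integral>\<^sup>+\<mu>. ennreal (norm \<mu>) \<partial>nu x) < \<infinity>"
    using fin by (simp add: order_le_less_trans)
  then show ?thesis unfolding form_dom_iff integrable_iff_bounded by simp
qed

lemma E_interval_op_dom: "E {-K..K} x \<in> op_dom"
proof -
  have "(\<integral>\<^sup>+\<mu>. ennreal (\<mu>\<^sup>2) \<partial>nu (E {-K..K} x))
      = (\<integral>\<^sup>+\<mu>. ennreal (indicator {-K..K} \<mu>) * ennreal (\<mu>\<^sup>2) \<partial>nu x)"
    unfolding nu_E[OF atLeastAtMost_borel] by (subst nn_integral_density) auto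
  also have "\<dots> \<le> (\<integral>\<^sup>+\<mu>. ennreal (K\<^sup>2) \<partial>nu x)"
  proof (intro nn_integral_mono)
    fix \<mu> :: real
    have "\<mu>\<^sup>2 \<le> K\<^sup>2" if "\<mu> \<in> {-K..K}"
      using that abs_le_square_iff[of \<mu> K] by auto
    then show "ennreal (indicator {-K..K} \<mu>) * ennreal (\<mu>\<^sup>2) \<le> ennreal (K\<^sup>2)"
      by (auto split: split_indicator)
  qed
  also have "\<dots> < \<infinity>"
    by (simp add: emeasure_nu_UNIV ennreal_mult_less_top flip: ennreal_mult)
  finally show ?thesis by (simp add: op_dom_iff)
qed

lemma Re_cinner_polarization:
  assumes A: "spectral_operator E domA A" and x: "x \<in> op_dom" and y: "y \<in> op_dom"
  shows "Re (cinner (A x) y) = (form (x + y) - form (x - y)) / 4"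
proof -
  have xy: "x \<in> domA" "y \<in> domA" using A x y by (auto simp: spectral_operator_def)
  have minus: "(-1) *\<^sub>C y = - y" using scaleR_scaleC[of "-1" y] by simp
  have "cinner (A x) y = (\<Sum>k<4::nat. \<i> ^ k * complex_of_real (form (x + (\<i> ^ k) *\<^sub>C y))) / 4"
    using A xy unfolding spectral_operator_def by blast
  then have "cinner (A x) y * 4 = complex_of_real (form (x + y)) + \<i> * complex_of_real (form (x + \<i> *\<^sub>C y))
      - complex_of_real (form (x - y)) - \<i> * complex_of_real (form (x + - \<i> *\<^sub>C y))"
    by (simp add: numeral_eq_Suc scaleC_one minus flip: diff_conv_add_uminus)
  then have "Re (cinner (A x) y * 4) = form (x + y) - form (x - y)" by simp
  then show ?thesis by simp
qed

lemma form_add_op_dom: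
  assumes A: "spectral_operator E domA A" and x: "x \<in> op_dom" and y: "y \<in> op_dom"
  shows "form (x + y) = form x + form y + 2 * Re (cinner (A x) y)"
  using Re_cinner_polarization[OF A x y]
    form_parallelogram(3)[OF op_dom_subset_form_dom[OF x] op_dom_subset_form_dom[OF y]]
  by simp

lemma form_op_dom:
  assumes A: "spectral_operator E domA A" and x: "x \<in> op_dom"
  shows "form x = Re (cinner (A x) x)"
proof -
  have xf: "x \<in> form_dom" by (rule op_dom_subset_form_dom[OF x])
  show ?thesis
    using form_add_op_dom[OF A x x] form_parallelogram(3)[OF xf xf] form_zero[OF xf] by simp
qed

text \<open>Lower bound for the form of u + v when only v lies in the operator domain: apply the
  expansion above to v and the spectrally truncated part E(B)u of u, and account for the
  spectral tails separately.\<close>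

lemma form_sum_truncated_bound:
  assumes A: "spectral_operator E domA A" and B: "B \<in> sets borel"
    and u: "u \<in> form_dom" and Bu: "E B u \<in> op_dom" and v: "v \<in> op_dom"
  shows "form u + form v - 2 * norm (A v) * norm u
      - form (E (- B) u) - form (E (- B) v) + form (E (- B) (u + v)) \<le> form (u + v)"
proof -
  have B': "- B \<in> sets borel" using B by auto
  have vf: "v \<in> form_dom" by (rule op_dom_subset_form_dom[OF v])
  have uvf: "u + v \<in> form_dom" by (rule form_parallelogram(1)[OF u vf])
  have "\<bar>Re (cinner (A v) (E B u))\<bar> \<le> norm (A v) * norm (E B u)"
    by (rule Re_cinner_Cauchy_Schwarz)
  also have "\<dots> \<le> norm (A v) * norm u" by (intro mult_left_mono norm_E_le[OF B]) simp
  finally have cs: "- (norm (A v) * norm u) \<le> Re (cinner (A v) (E B u))" by simp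
  have expand: "form (v + E B u) = form v + form (E B u) + 2 * Re (cinner (A v) (E B u))"
    by (rule form_add_op_dom[OF A v Bu])
  have inside: "E B (v + E B u) = E B (u + v)" and outside: "E (- B) (v + E B u) = E (- B) v"
    using B B' E_disjoint[of "- B" B u] by (auto simp: E_add E_idem add.commute)
  have "form (v + E B u) = form (E B (u + v)) + form (E (- B) v)"
    using form_split[OF B form_parallelogram(1)[OF vf form_E(1)[OF B u]]] inside outside by simp
  moreover have "form (u + v) = form (E B (u + v)) + form (E (- B) (u + v))"
    by (rule form_split[OF B uvf])
  moreover have "form u = form (E B u) + form (E (- B) u)"
    by (rule form_split[OF B u])
  ultimately show ?thesis using expand cs by linarith
qed

text \<open>Letting B = [-n,n] with n tending to infinity removes the spectral tails.\<close>

lemma form_sum_lower_bound: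
  assumes A: "spectral_operator E domA A" and u: "u \<in> form_dom" and v: "v \<in> op_dom"
  shows "form u + form v - 2 * norm (A v) * norm u \<le> form (u + v)"
proof -
  let ?tail = "\<lambda>x n. form (E (- {- real n..real n}) x)"
  have vf: "v \<in> form_dom" by (rule op_dom_subset_form_dom[OF v])
  have uvf: "u + v \<in> form_dom" by (rule form_parallelogram(1)[OF u vf])
  have "(\<lambda>n. form u + form v - 2 * norm (A v) * norm u - ?tail u n - ?tail v n + ?tail (u + v) n)
      \<longlonglongrightarrow> form u + form v - 2 * norm (A v) * norm u - 0 - 0 + 0"
    by (intro tendsto_intros form_tail_tendsto_zero u vf uvf)
  moreover have "form u + form v - 2 * norm (A v) * norm u - ?tail u n - ?tail v n + ?tail (u + v) n
      \<le> form (u + v)" for n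
    by (rule form_sum_truncated_bound[OF A _ u E_interval_op_dom v]) simp
  ultimately show ?thesis by (simp add: LIMSEQ_le_const2)
qed

end

section \<open>The form of the perturbed vector at the right endpoint\<close>

text \<open>Under a c > b (a + b + 3 c) the quadratic form a X^2 - 2 b X Y - b Y^2 + c (X - Y)^2
  is positive definite: multiplied by p = a + c it is a sum of the square (p X - q Y)^2
  and (p r - q^2) Y^2, where q = b + c, r = c - b and p r - q^2 = a c - b (a + b + 3 c).\<close>

lemma quadratic_form_positive:
  fixes a b c X Y :: real
  assumes "a > 0" "c > 0" "a * c > b * (a + b + 3 * c)" and nz: "X \<noteq> 0 \<or> Y \<noteq> 0"
  shows "a * X\<^sup>2 - 2 * b * X * Y - b * Y\<^sup>2 + c * (X - Y)\<^sup>2 > 0"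
proof -
  define L where "L = a * X\<^sup>2 - 2 * b * X * Y - b * Y\<^sup>2 + c * (X - Y)\<^sup>2"
  define p where "p = a + c"
  define q where "q = b + c"
  define r where "r = c - b"
  have p: "p > 0" using assms by (simp add: p_def)
  have disc: "p * r - q\<^sup>2 > 0"
    using assms by (simp add: p_def q_def r_def power2_eq_square algebra_simps)
  have sos: "p * L = (p * X - q * Y)\<^sup>2 + (p * r - q\<^sup>2) * Y\<^sup>2"
    by (simp add: L_def p_def q_def r_def power2_eq_square algebra_simps)
  have "p * L > 0"
  proof (cases "Y = 0")
    case True
    then show ?thesis using sos p nz by simp
  next
    case False
    then have "(p * r - q\<^sup>2) * Y\<^sup>2 > 0" using disc by simp
    then show ?thesis using sos by (simp add: add_nonneg_pos)
  qed
  then show ?thesis using p by (simp add: L_def zero_less_mult_iff)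
qed

lemma perturbed_form_bound:
  assumes A: "spectral_operator E domA A"
    and u: "u \<in> spectral_form_dom E" "spectral_form E u \<ge> a * (norm u)\<^sup>2"
    and v: "v \<in> domA" "norm (A v) \<le> b * norm v"
    and abc: "a > 0" "c > 0" "a * c > b * (a + b + 3 * c)"
    and nz: "u \<noteq> 0 \<or> v \<noteq> 0"
  shows "u + v \<in> spectral_form_dom E" "u + v \<noteq> 0"
    and "spectral_form E (u + v) > - c * (norm (u + v))\<^sup>2"
proof -
  interpret spectral_resolution E
    using A by (simp add: spectral_operator_def spectral_resolution_def)
  have v_op: "v \<in> op_dom" using A v(1) by (simp add: spectral_operator_def)
  define X where "X = norm u"
  define Y where "Y = norm v"
  have "- (b * Y\<^sup>2) \<le> form v"
  proof -
    have "\<bar>Re (cinner (A v) v)\<bar> \<le> norm (A v) * norm v"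
      by (rule Re_cinner_Cauchy_Schwarz)
    also have "\<dots> \<le> b * Y * Y" using v(2) by (simp add: Y_def mult_right_mono)
    finally have "\<bar>Re (cinner (A v) v)\<bar> \<le> b * Y * Y" .
    then show ?thesis using form_op_dom[OF A v_op] by (simp add: power2_eq_square)
  qed
  moreover have "form u + form v - 2 * (b * Y) * X \<le> form (u + v)"
    using form_sum_lower_bound[OF A u(1) v_op] v(2) mult_right_mono[OF v(2), of X]
    by (simp add: X_def Y_def)
  ultimately have lower: "a * X\<^sup>2 - 2 * b * X * Y - b * Y\<^sup>2 \<le> form (u + v)"
    using u(2) by (simp add: X_def mult_ac)
  have "\<bar>X - Y\<bar> \<le> norm (u + v)"
    using norm_triangle_ineq3[of u "- v"] by (simp add: X_def Y_def)
  then have "(X - Y)\<^sup>2 \<le> (norm (u + v))\<^sup>2"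
    using abs_le_square_iff[of "X - Y" "norm (u + v)"] by simp
  then have "c * (X - Y)\<^sup>2 \<le> c * (norm (u + v))\<^sup>2" using abc(2) by simp
  moreover have "a * X\<^sup>2 - 2 * b * X * Y - b * Y\<^sup>2 + c * (X - Y)\<^sup>2 > 0"
    using quadratic_form_positive[OF abc] nz by (simp add: X_def Y_def)
  ultimately show bound: "form (u + v) > - c * (norm (u + v))\<^sup>2" using lower by linarith
  show uv: "u + v \<in> form_dom"
    by (rule form_parallelogram(1)[OF u(1) op_dom_subset_form_dom[OF v_op]])
  show "u + v \<noteq> 0" using bound form_zero[OF uv] by auto
qed

section \<open>A comparison argument for a decreasing eigenvalue-crossing function\<close>

definition crosses_downward_on :: "real set \<Rightarrow> (real \<Rightarrow> real) \<Rightarrow> bool" where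
  "crosses_downward_on I f \<longleftrightarrow>
     (\<forall>l\<^sub>0\<in>I. \<forall>l\<in>I. f l\<^sub>0 = 0 \<longrightarrow> (l < l\<^sub>0 \<longrightarrow> f l > 0) \<and> (l\<^sub>0 < l \<longrightarrow> f l < 0))"

lemma negative_after_nonpositive:
  fixes f :: "real \<Rightarrow> real"
  assumes cont: "continuous_on {lo..hi} f" and cross: "crosses_downward_on {lo..hi} f"
    and f1: "f lo \<le> 0" and l: "lo < l" "l \<le> hi"
  shows "f l < 0"
proof (cases "f lo = 0")
  case True
  then show ?thesis using cross l unfolding crosses_downward_on_def by auto
next
  case False
  show ?thesis
  proof (rule ccontr)
    assume "\<not> f l < 0"
    moreover have "continuous_on {lo..l} f" using l by (intro continuous_on_subset[OF cont]) auto
    ultimately obtain x where x: "lo \<le> x" "x \<le> l" "f x = 0"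
      using IVT'[of f lo 0 l] f1 l by auto
    then have "lo < x" using False by (cases "x = lo") auto
    then have "f lo > 0" using cross x l unfolding crosses_downward_on_def by auto
    then show False using f1 by simp
  qed
qed

text \<open>Proof: h l = f l + C (l - lo)/(hi - lo)
  is nonpositive at lo; past the last point s where h <= 0 we have -e < f < 0, so h is
  nonincreasing there, contradicting h hi > 0.\<close>

lemma descent_bound:
  fixes f f' :: "real \<Rightarrow> real"
  assumes m: "lo < hi"
    and cont: "continuous_on {lo..hi} f"
    and der: "\<And>l. l \<in> {lo..hi} \<Longrightarrow> (f has_real_derivative f' l) (at l within {lo..hi})"
    and neg: "\<And>l. lo < l \<Longrightarrow> l \<le> hi \<Longrightarrow> f l < 0"
    and bnd: "\<And>l. l \<in> {lo..hi} \<Longrightarrow> \<bar>f l\<bar> \<le> e \<Longrightarrow> f' l \<le> - d"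
    and f1: "f lo \<le> 0" and C: "C \<le> e" "C \<le> d * (hi - lo)" "0 \<le> C"
  shows "f hi \<le> - C"
proof (rule ccontr)
  assume nc: "\<not> f hi \<le> - C"
  define k where "k = C / (hi - lo)"
  define h where "h l = f l + k * (l - lo)" for l
  have km: "k * (hi - lo) = C" using m by (simp add: k_def)
  have k0: "k \<ge> 0" using m C by (simp add: k_def)
  have kd: "k \<le> d" using m C(2) by (simp add: k_def pos_divide_le_eq)
  have h_hi: "h hi > 0" using nc km by (simp add: h_def)
  have hcont: "continuous_on {lo..hi} h" unfolding h_def by (intro continuous_intros cont)
  define S where "S = {lo..hi} \<inter> h -` {..0}"
  have clS: "closed S" unfolding S_def by (rule continuous_closed_preimage[OF hcont]) auto
  have lo_S: "lo \<in> S" using m f1 by (simp add: S_def h_def)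
  have bS: "bdd_above S" unfolding S_def by (rule bdd_aboveI[of _ hi]) auto
  define s where "s = Sup S"
  have sS: "s \<in> S" unfolding s_def using closed_contains_Sup[OF _ bS clS] lo_S by auto
  have s: "lo \<le> s" "s \<le> hi" "h s \<le> 0" using sS by (auto simp: S_def)
  have s2: "s < hi" using s h_hi by (cases "s = hi") auto
  have h_pos: "h l > 0" if "s < l" "l \<le> hi" for l
  proof (rule ccontr)
    assume "\<not> h l > 0"
    then have "l \<in> S" using that s by (auto simp: S_def)
    then have "l \<le> s" unfolding s_def by (rule cSup_upper[OF _ bS])
    then show False using that by simp
  qed
  have hder: "(h has_real_derivative (f' l + k)) (at l)" if "s < l" "l < hi" for l
  proof -
    have "l \<in> interior {lo..hi}" using that s by auto
    then have "(f has_real_derivative f' l) (at l)"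
      using der[of l] that s at_within_interior[of l "{lo..hi}"] by auto
    then show ?thesis unfolding h_def by (auto intro!: derivative_eq_intros)
  qed
  have hder_nonpos: "f' l + k \<le> 0" if "s < l" "l < hi" for l
  proof -
    have "f l > - k * (l - lo)" using h_pos[of l] that by (simp add: h_def)
    moreover have "k * (l - lo) \<le> k * (hi - lo)" using k0 that by (intro mult_left_mono) auto
    moreover have "f l < 0" using neg[of l] that s by auto
    ultimately have "\<bar>f l\<bar> \<le> e" using km C by auto
    then have "f' l \<le> - d" using bnd[of l] that s by auto
    then show ?thesis using kd by linarith
  qed
  have "continuous_on {s..hi} h" using s by (intro continuous_on_subset[OF hcont]) auto
  moreover have "h differentiable (at x)" if "s < x" "x < hi" for x
    using hder[OF that] real_differentiable_def by blast
  ultimately obtain l z where z: "s < z" "z < hi" "DERIV h z :> l" "h hi - h s = (hi - s) * l"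
    using MVT[OF s2] by blast
  have "l = f' z + k" using DERIV_unique[OF z(3) hder[OF z(1,2)]] .
  then have "(hi - s) * l \<le> 0" using hder_nonpos z s2 by (simp add: mult_nonneg_nonpos)
  then show False using z(4) s h_hi by linarith
qed

lemma positive_at_left_endpoint:
  fixes f f' :: "real \<Rightarrow> real"
  assumes m: "lo < hi"
    and cont: "continuous_on {lo..hi} f" and cross: "crosses_downward_on {lo..hi} f"
    and der: "\<And>l. l \<in> {lo..hi} \<Longrightarrow> (f has_real_derivative f' l) (at l within {lo..hi})"
    and bnd: "\<And>l. l \<in> {lo..hi} \<Longrightarrow> \<bar>f l\<bar> \<le> e \<Longrightarrow> f' l \<le> - d"
    and C: "C \<le> e" "C \<le> d * (hi - lo)" "0 \<le> C" and f2: "f hi > - C"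
  shows "f lo > 0"
proof (rule ccontr)
  assume "\<not> f lo > 0"
  then have f1: "f lo \<le> 0" by simp
  have "f hi \<le> - C"
    using descent_bound[OF m cont der negative_after_nonpositive[OF cont cross f1] bnd f1 C] .
  then show False using f2 by simp
qed

theorem lemma2p8:
  fixes \<Delta> :: "real set"
    and E :: "real \<Rightarrow> real set \<Rightarrow> 'a::{complex_inner, complete_space} \<Rightarrow> 'a"
    and domT :: "real \<Rightarrow> 'a set"
    and T :: "real \<Rightarrow> 'a \<Rightarrow> 'a"
    and t :: "real \<Rightarrow> 'a \<Rightarrow> real"
    and t' :: "real \<Rightarrow> 'a \<Rightarrow> real"
    and \<D> :: "'a set"
    and \<mu>\<^sub>1 \<mu>\<^sub>2 \<epsilon> \<delta> a b c :: real
    and u v :: 'a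
  assumes interval: "is_interval \<Delta>"
    and A1: "\<forall>l\<in>\<Delta>. spectral_operator (E l) (domT l) (T l)"
    and t_def: "\<forall>l\<in>\<Delta>. \<forall>x\<in>\<D>. t l x = spectral_form (E l) x"
    and A2: "\<forall>l\<in>\<Delta>. spectral_form_dom (E l) = \<D>"
    and A3: "\<forall>x\<in>\<D> - {0}. continuous_on \<Delta> (\<lambda>l. t l x) \<and>
               (\<forall>l\<^sub>0\<in>\<Delta>. t l\<^sub>0 x = 0 \<longrightarrow>
                  (\<forall>l\<in>\<Delta>. (l < l\<^sub>0 \<longrightarrow> t l x > 0) \<and> (l > l\<^sub>0 \<longrightarrow> t l x < 0)))"
    and VM_deriv: "\<forall>x\<in>\<D>. \<forall>l\<in>\<Delta>. ((\<lambda>s. t s x) has_real_derivative t' l x) (at l within \<Delta>)"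
    and VM_bound: "\<forall>p q. p \<le> q \<and> {p..q} \<subseteq> \<Delta> \<longrightarrow>
               (\<exists>\<epsilon>'>0. \<exists>\<delta>'>0. \<forall>x\<in>\<D>. \<forall>l\<in>{p..q}.
                  norm x = 1 \<and> \<bar>t l x\<bar> \<le> \<epsilon>' \<longrightarrow> t' l x \<le> - \<delta>')"
    and mu: "\<mu>\<^sub>1 \<in> \<Delta>" "\<mu>\<^sub>2 \<in> \<Delta>" "\<mu>\<^sub>1 < \<mu>\<^sub>2"
    and eps_delta: "\<epsilon> > 0" "\<delta> > 0"
    and eps_delta_prop: "\<forall>l\<in>{\<mu>\<^sub>1..\<mu>\<^sub>2}. \<forall>x\<in>\<D>.
               \<bar>t l x\<bar> \<le> \<epsilon> * (norm x)\<^sup>2 \<longrightarrow> t' l x \<le> - \<delta> * (norm x)\<^sup>2"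
    and ab: "a > 0" "b > 0"
    and c_def: "c = min \<epsilon> (\<delta> * (\<mu>\<^sub>2 - \<mu>\<^sub>1))"
    and abc: "a * c > b * (a + b + 3 * c)"
    and u: "u \<in> \<D>" "t \<mu>\<^sub>2 u \<ge> a * (norm u)\<^sup>2"
    and v: "v \<in> domT \<mu>\<^sub>2" "norm (T \<mu>\<^sub>2 v) \<le> b * norm v"
    and nz: "u \<noteq> 0 \<or> v \<noteq> 0"
  shows "t \<mu>\<^sub>1 (u + v) > 0"
proof -
  have I: "{\<mu>\<^sub>1..\<mu>\<^sub>2} \<subseteq> \<Delta>"
    using interval[unfolded is_interval_1, rule_format, OF mu(1) mu(2)] by auto
  have c: "c > 0" "c \<le> \<epsilon>" "c \<le> \<delta> * (\<mu>\<^sub>2 - \<mu>\<^sub>1)" using eps_delta mu(3) by (simp_all add: c_def)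
  have dom: "spectral_form_dom (E \<mu>\<^sub>2) = \<D>" and t2: "\<And>x. x \<in> \<D> \<Longrightarrow> t \<mu>\<^sub>2 x = spectral_form (E \<mu>\<^sub>2) x"
    using A2 t_def mu(2) by auto
  have u2: "u \<in> spectral_form_dom (E \<mu>\<^sub>2)" "spectral_form (E \<mu>\<^sub>2) u \<ge> a * (norm u)\<^sup>2"
    using u dom t2 by auto
  note form_bound = perturbed_form_bound[OF bspec[OF A1 mu(2)] u2 v ab(1) c(1) abc nz]
  have w: "u + v \<in> \<D>" "u + v \<noteq> 0" and f2: "t \<mu>\<^sub>2 (u + v) > - c * (norm (u + v))\<^sup>2"
    using form_bound dom t2[of "u + v"] by auto
  have A3w: "continuous_on \<Delta> (\<lambda>l. t l (u + v))"
    "\<forall>l\<^sub>0\<in>\<Delta>. t l\<^sub>0 (u + v) = 0 \<longrightarrow>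
       (\<forall>l\<in>\<Delta>. (l < l\<^sub>0 \<longrightarrow> t l (u + v) > 0) \<and> (l > l\<^sub>0 \<longrightarrow> t l (u + v) < 0))"
    using bspec[OF A3, of "u + v"] w by auto
  define N where "N = (norm (u + v))\<^sup>2"
  have N: "N > 0" using w(2) by (simp add: N_def)
  show ?thesis
  proof (rule positive_at_left_endpoint[where f = "\<lambda>l. t l (u + v)" and f' = "\<lambda>l. t' l (u + v)"
        and lo = "\<mu>\<^sub>1" and hi = "\<mu>\<^sub>2" and e = "\<epsilon> * N" and d = "\<delta> * N" and C = "c * N"])
    show "\<mu>\<^sub>1 < \<mu>\<^sub>2" by (rule mu(3))
    show "continuous_on {\<mu>\<^sub>1..\<mu>\<^sub>2} (\<lambda>l. t l (u + v))"
      using continuous_on_subset[OF A3w(1) I] .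
    show "crosses_downward_on {\<mu>\<^sub>1..\<mu>\<^sub>2} (\<lambda>l. t l (u + v))"
      using A3w(2) I unfolding crosses_downward_on_def by (meson subsetD)
    show "((\<lambda>l. t l (u + v)) has_real_derivative t' l (u + v)) (at l within {\<mu>\<^sub>1..\<mu>\<^sub>2})"
      if "l \<in> {\<mu>\<^sub>1..\<mu>\<^sub>2}" for l
      by (rule DERIV_subset[OF _ I]) (use VM_deriv w(1) I that in blast)
    show "t' l (u + v) \<le> - (\<delta> * N)" if "l \<in> {\<mu>\<^sub>1..\<mu>\<^sub>2}" "\<bar>t l (u + v)\<bar> \<le> \<epsilon> * N" for l
      using eps_delta_prop that w(1) by (simp add: N_def)
    show "c * N \<le> \<epsilon> * N" "c * N \<le> \<delta> * N * (\<mu>\<^sub>2 - \<mu>\<^sub>1)" "0 \<le> c * N"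
      using mult_right_mono[OF c(2), of N] mult_right_mono[OF c(3), of N] c(1) N
      by (simp_all add: mult_ac)
    show "t \<mu>\<^sub>2 (u + v) > - (c * N)" using f2 by (simp add: N_def)
  qed
qed

end
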